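(* A fuzzy subset $\mu$ of a fuzzy $\Gamma$-hypersemigroup $(M,\circ)$ is a fuzzy $\Gamma$-hyper interior ideal of $(M,\circ)$ if and only if $(\chi_M\circ\alpha\circ\mu)\circ\beta\circ\chi_M\subseteq\mu$ for all $\alpha,\beta\in\Gamma$.
   Context: $M,\Gamma$ are nonempty sets; a fuzzy subset of $M$ is a map $M\to[0,1]$. A fuzzy $\Gamma$-hyperoperation assigns to each $(a,\gamma,b)\in M\times\Gamma\times M$ a fuzzy subset $a\circ\gamma\circ b$. For $a\in M$ and fuzzy $\mu$: $(a\circ\gamma\circ\mu)(r)=\bigvee_{t\in M}((a\circ\gamma\circ t)(r)\wedge\mu(t))$ if $\mu\ne0$, else $0$; $(\mu\circ\gamma\circ a)(r)=\bigvee_{t\in M}(\mu(t)\wedge(t\circ\gamma\circ a)(r))$ if $\mu\ne0$, else $0$. For fuzzy $\mu,\nu$: $(\mu\circ\gamma\circ\nu)(t)=\bigvee_{p,q\in M}(\mu(p)\wedge(p\circ\gamma\circ q)(t)\wedge\nu(q))$. $(M,\circ)$ is a fuzzy $\Gamma$-hypersemigroup if $(a\circ\alpha\circ b)\circ\beta\circ c=a\circ\alpha\circ(b\circ\beta\circ c)$ for all $a,b,c\in M$, $\alpha,\beta\in\Gamma$. $\chi_M$ is the constant function $1$. For fuzzy sets, $\mu\subseteq\nu$ means $\mu(x)\le\nu(x)$ for all $x$. A fuzzy subset $\mu$ is a fuzzy $\Gamma$-hyper interior ideal if $(x\circ\alpha\circ\mu)\circ\beta\circ y\subseteq\mu$ for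 all $x,y\in M$, $\alpha,\beta\in\Gamma$. *)

theory Defs
  imports Main "HOL.Real"
begin

text \<open>The sets M and Gamma are rendered as the (nonempty) types 'm and 'g.
  Fuzzy subsets are real-valued maps with values in [0,1]; the supremum
  of a family of values in [0,1] is the real Sup.\<close>

definition fuzzy_subset :: "('m \<Rightarrow> real) \<Rightarrow> bool" where
  "fuzzy_subset \<mu> \<longleftrightarrow> (\<forall>x. 0 \<le> \<mu> x \<and> \<mu> x \<le> 1)"

definition chiM :: "'m \<Rightarrow> real" where
  "chiM = (\<lambda>_. 1)"

text \<open>A fuzzy Gamma-hyperoperation: hop a g b is the fuzzy subset a o g o b.\<close>
definition fuzzy_hyperop :: "('m \<Rightarrow> 'g \<Rightarrow> 'm \<Rightarrow> 'm \<Rightarrow> real) \<Rightarrow> bool" where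
  "fuzzy_hyperop hop \<longleftrightarrow> (\<forall>a g b. fuzzy_subset (hop a g b))"

definition elem_fuzzy ::
  "('m \<Rightarrow> 'g \<Rightarrow> 'm \<Rightarrow> 'm \<Rightarrow> real) \<Rightarrow> 'm \<Rightarrow> 'g \<Rightarrow> ('m \<Rightarrow> real) \<Rightarrow> 'm \<Rightarrow> real" where
  "elem_fuzzy hop a g \<mu> r =
     (if \<mu> = (\<lambda>_. 0) then 0 else (SUP t. min (hop a g t r) (\<mu> t)))"

definition fuzzy_elem ::
  "('m \<Rightarrow> 'g \<Rightarrow> 'm \<Rightarrow> 'm \<Rightarrow> real) \<Rightarrow> ('m \<Rightarrow> real) \<Rightarrow> 'g \<Rightarrow> 'm \<Rightarrow> 'm \<Rightarrow> real" where
  "fuzzy_elem hop \<mu> g a r =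
     (if \<mu> = (\<lambda>_. 0) then 0 else (SUP t. min (\<mu> t) (hop t g a r)))"

definition fuzzy_fuzzy ::
  "('m \<Rightarrow> 'g \<Rightarrow> 'm \<Rightarrow> 'm \<Rightarrow> real) \<Rightarrow> ('m \<Rightarrow> real) \<Rightarrow> 'g \<Rightarrow> ('m \<Rightarrow> real) \<Rightarrow> 'm \<Rightarrow> real" where
  "fuzzy_fuzzy hop \<mu> g \<nu> t =
     (SUP pq. min (\<mu> (fst pq)) (min (hop (fst pq) g (snd pq) t) (\<nu> (snd pq))))"

definition fuzzy_Gamma_hypersemigroup :: "('m \<Rightarrow> 'g \<Rightarrow> 'm \<Rightarrow> 'm \<Rightarrow> real) \<Rightarrow> bool" where
  "fuzzy_Gamma_hypersemigroup hop \<longleftrightarrow> fuzzy_hyperop hop \<and>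
     (\<forall>a b c \<alpha> \<beta>. fuzzy_elem hop (hop a \<alpha> b) \<beta> c = elem_fuzzy hop a \<alpha> (hop b \<beta> c))"

definition fuzzy_subseteq :: "('m \<Rightarrow> real) \<Rightarrow> ('m \<Rightarrow> real) \<Rightarrow> bool" where
  "fuzzy_subseteq \<mu> \<nu> \<longleftrightarrow> (\<forall>x. \<mu> x \<le> \<nu> x)"

definition fuzzy_hyper_interior_ideal ::
  "('m \<Rightarrow> 'g \<Rightarrow> 'm \<Rightarrow> 'm \<Rightarrow> real) \<Rightarrow> ('m \<Rightarrow> real) \<Rightarrow> bool" where
  "fuzzy_hyper_interior_ideal hop \<mu> \<longleftrightarrow>
     (\<forall>x y \<alpha> \<beta>. fuzzy_subseteq (fuzzy_elem hop (elem_fuzzy hop x \<alpha> \<mu>) \<beta> y) \<mu>)"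

end

theory Submission
  imports Defs
begin

text \<open>All values of the hyperoperation lie in [0,1], so every supremum in the compositions is
  bounded, and \<open>min (SUP i. f i) h \<le> c\<close> holds exactly when \<open>min (f i) h \<le> c\<close> holds for
  every \<open>i\<close>. Unfolding both sides of the equivalence in this way turns each into the same
  pointwise condition \<open>interior_bound\<close>: the factors \<open>\<chi>\<^sub>M = 1\<close> drop out since
  \<open>min 1 v = v\<close> on [0,1].\<close>

lemma min_cSUP_le_iff:
  fixes f :: "'i \<Rightarrow> 'a::conditionally_complete_linorder"
  assumes "bdd_above (range f)"
  shows "min (SUP i. f i) h \<le> c \<longleftrightarrow> (\<forall>i. min (f i) h \<le> c)"
proof (cases "h \<le> c")
  case False
  then show ?thesis using cSUP_le_iff[OF UNIV_not_empty assms] by (auto simp: min_le_iff_disj)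
qed (simp add: min_le_iff_disj)

lemma fuzzy_hyperop_le_one: "fuzzy_hyperop hop \<Longrightarrow> hop a g b r \<le> 1"
  by (simp add: fuzzy_hyperop_def fuzzy_subset_def)

lemma elem_fuzzy_min_le_iff:
  assumes "fuzzy_hyperop hop" and "0 \<le> c"
  shows "min (elem_fuzzy hop a g \<mu> r) h \<le> c \<longleftrightarrow> (\<forall>t. min (min (hop a g t r) (\<mu> t)) h \<le> c)"
proof -
  have "bdd_above (range (\<lambda>t. min (hop a g t r) (\<mu> t)))"
    by (rule bdd_aboveI[of _ 1]) (auto simp: min_le_iff_disj fuzzy_hyperop_le_one[OF assms(1)])
  then show ?thesis
    using assms(2) by (cases "\<mu> = (\<lambda>_. 0)")
      (simp add: elem_fuzzy_def min_le_iff_disj, simp add: elem_fuzzy_def min_cSUP_le_iff)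
qed

lemma fuzzy_elem_le_iff:
  assumes "fuzzy_hyperop hop" and "0 \<le> c"
  shows "fuzzy_elem hop \<nu> g a r \<le> c \<longleftrightarrow> (\<forall>t. min (\<nu> t) (hop t g a r) \<le> c)"
proof -
  have "bdd_above (range (\<lambda>t. min (\<nu> t) (hop t g a r)))"
    by (rule bdd_aboveI[of _ 1]) (auto simp: min_le_iff_disj fuzzy_hyperop_le_one[OF assms(1)])
  then show ?thesis
    using assms(2) by (cases "\<nu> = (\<lambda>_. 0)")
      (simp_all add: fuzzy_elem_def cSUP_le_iff min_le_iff_disj)
qed

lemma bdd_above_fuzzy_fuzzy_terms:
  assumes "fuzzy_hyperop hop"
  shows "bdd_above (range (\<lambda>pq. min (\<mu> (fst pq)) (min (hop (fst pq) g (snd pq) t) (\<nu> (snd pq)))))"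
  by (rule bdd_aboveI[of _ 1]) (auto simp: min_le_iff_disj fuzzy_hyperop_le_one[OF assms])

lemma fuzzy_fuzzy_min_le_iff:
  assumes "fuzzy_hyperop hop"
  shows "min (fuzzy_fuzzy hop \<mu> g \<nu> t) h \<le> c \<longleftrightarrow>
    (\<forall>p q. min (min (\<mu> p) (min (hop p g q t) (\<nu> q))) h \<le> c)"
  by (simp add: fuzzy_fuzzy_def min_cSUP_le_iff[OF bdd_above_fuzzy_fuzzy_terms[OF assms]])

lemma fuzzy_fuzzy_le_iff:
  assumes "fuzzy_hyperop hop"
  shows "fuzzy_fuzzy hop \<mu> g \<nu> t \<le> c \<longleftrightarrow> (\<forall>p q. min (\<mu> p) (min (hop p g q t) (\<nu> q)) \<le> c)"
  by (simp add: fuzzy_fuzzy_def cSUP_le_iff[OF UNIV_not_empty bdd_above_fuzzy_fuzzy_terms[OF assms]])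

definition interior_bound :: "('m \<Rightarrow> 'g \<Rightarrow> 'm \<Rightarrow> 'm \<Rightarrow> real) \<Rightarrow> ('m \<Rightarrow> real) \<Rightarrow> bool" where
  "interior_bound hop \<mu> \<longleftrightarrow>
     (\<forall>x \<alpha> q t \<beta> y z. min (min (hop x \<alpha> q t) (\<mu> q)) (hop t \<beta> y z) \<le> \<mu> z)"

lemma fuzzy_hyper_interior_ideal_iff_interior_bound:
  assumes "fuzzy_hyperop hop" and "fuzzy_subset \<mu>"
  shows "fuzzy_hyper_interior_ideal hop \<mu> \<longleftrightarrow> interior_bound hop \<mu>"
  using assms(2)
  by (simp add: fuzzy_hyper_interior_ideal_def interior_bound_def fuzzy_subseteq_def
      fuzzy_subset_def fuzzy_elem_le_iff[OF assms(1)] elem_fuzzy_min_le_iff[OF assms(1)]) blast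

lemma chiM_composition_bounded_iff_interior_bound:
  assumes "fuzzy_hyperop hop"
  shows "(\<forall>\<alpha> \<beta>. fuzzy_subseteq (fuzzy_fuzzy hop (fuzzy_fuzzy hop chiM \<alpha> \<mu>) \<beta> chiM) \<mu>)
    \<longleftrightarrow> interior_bound hop \<mu>"
proof -
  have one: "min 1 (min (hop a g b r) v) = min (hop a g b r) v"
    "min (hop a g b r) 1 = hop a g b r" for a g b r v
    using fuzzy_hyperop_le_one[OF assms, of a g b r] by (simp_all add: min_absorb1 min_absorb2)
  show ?thesis
    by (simp add: fuzzy_subseteq_def interior_bound_def chiM_def one
        fuzzy_fuzzy_le_iff[OF assms] fuzzy_fuzzy_min_le_iff[OF assms]) blast
qed

theorem theorem4p16:
  fixes hop :: "'m \<Rightarrow> 'g \<Rightarrow> 'm \<Rightarrow> 'm \<Rightarrow> real" and \<mu> :: "'m \<Rightarrow> real"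
  assumes "fuzzy_Gamma_hypersemigroup hop"
    and "fuzzy_subset \<mu>"
  shows "fuzzy_hyper_interior_ideal hop \<mu> \<longleftrightarrow>
    (\<forall>\<alpha> \<beta>. fuzzy_subseteq (fuzzy_fuzzy hop (fuzzy_fuzzy hop chiM \<alpha> \<mu>) \<beta> chiM) \<mu>)"
proof -
  have hop: "fuzzy_hyperop hop"
    using assms(1) by (simp add: fuzzy_Gamma_hypersemigroup_def)
  show ?thesis
    using fuzzy_hyper_interior_ideal_iff_interior_bound[OF hop assms(2)]
      chiM_composition_bounded_iff_interior_bound[OF hop] by simp
qed

end
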